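(* Let $k\ge1$, let $n_k\in\{0,1\}^k$, and let $\eta=\alpha\circ\tau_{n_k}\colon\Sigma\to\Sigma$. Then: (i) $\eta$ is continuous; (ii) $\underline0$ is a periodic point of $\eta$ of period $2^k$, and its $\eta$-orbit intersects the cylinder $\Sigma_{n_k}$ in exactly one point, namely $n_k\underline0$; (iii) every point $\underline n\in B$ is $\eta$-periodic; either it is a $2^k$-periodic point lying in the $\eta$-orbit of $\underline0$, or it is an $m\cdot2^k$-periodic point of $\eta$ for some positive integer $m$.
   Context: $\Sigma=\{0,1\}^{\mathbb N}$ with the product topology. For a $k$-block $n_k\in\{0,1\}^k$, the cylinder $\Sigma_{n_k}$ is the set of sequences beginning with $n_k$; $n_k\underline0$ denotes the concatenation of $n_k$ with the constant sequence $\underline0=000\dots$, and $\underline1=111\dots$. $B$ is the set of sequences that are eventually constant (eventually all $0$ or eventually all $1$). The adding machine $\alpha\colon\Sigma\to\Sigma$ adds $1\underline0=1000\dots$ with carry to the right (the first coordinate being least significant), i.e. $\alpha(x)=x+1\underline0$ in the 2-adic integers; e.g. $\underline1\mapsto\underline0\mapsto1\underline0\mapsto01\underline0\mapsto11\underline0$. $\tau_{n_k}\colon\Sigma\to\Sigma$ is the identity on sequences not in $\Sigma_{n_k}$, and on $\Sigma_{n_k}$ keeps the first $k$ symbols and swaps $0\leftrightarrow1$ in all remaining coordinates, e.g. $\tau_{n_k}(n_k110100\dots)=n_k001011\dots$. *)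

theory Defs
  imports "HOL-Analysis.Analysis"
begin

text \<open>Sigma = {0,1}^N is modelled as nat => bool (True = 1, False = 0),
  coordinate 0 being the first (least significant) one.\<close>

type_synonym seq = "nat \<Rightarrow> bool"

definition Sigma_top :: "seq topology" where
  "Sigma_top = product_topology (\<lambda>_. discrete_topology (UNIV :: bool set)) UNIV"

text \<open>Adding machine: add 1000... with carry to the right.
  Coordinate i flips iff all earlier coordinates are 1.\<close>
definition adding_machine :: "seq \<Rightarrow> seq" where
  "adding_machine x = (\<lambda>i. if (\<forall>j<i. x j) then \<not> x i else x i)"

definition cylinder :: "bool list \<Rightarrow> seq set" where
  "cylinder w = {x. \<forall>i<length w. x i = w ! i}"

definition conc_const :: "bool list \<Rightarrow> bool \<Rightarrow> seq" where
  "conc_const w c = (\<lambda>i. if i < length w then w ! i else c)"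

definition tau :: "bool list \<Rightarrow> seq \<Rightarrow> seq" where
  "tau w x = (if x \<in> cylinder w then (\<lambda>i. if i < length w then x i else \<not> x i) else x)"

definition B_set :: "seq set" where
  "B_set = {x. \<exists>N c. \<forall>i\<ge>N. x i = c}"

definition periodic_of_period :: "('a \<Rightarrow> 'a) \<Rightarrow> nat \<Rightarrow> 'a \<Rightarrow> bool" where
  "periodic_of_period f p x \<longleftrightarrow> 0 < p \<and> (f ^^ p) x = x \<and> (\<forall>q. 0 < q \<and> q < p \<longrightarrow> (f ^^ q) x \<noteq> x)"

definition periodic_point :: "('a \<Rightarrow> 'a) \<Rightarrow> 'a \<Rightarrow> bool" where
  "periodic_point f x \<longleftrightarrow> (\<exists>p>0. (f ^^ p) x = x)"

definition orbit :: "('a \<Rightarrow> 'a) \<Rightarrow> 'a \<Rightarrow> 'a set" where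
  "orbit f x = {(f ^^ j) x | j. True}"

end

theory Submission
  imports Defs
begin

text \<open>Write a point of Sigma as a block of length k followed by a tail. Then eta increments the
  block in binary (wrapping around) and touches the tail only when the block is w (tau
  complements the tail) or consists of ones (the carry of the adding machine enters the tail).
  After 2^k steps the block is back and the tail has been moved by the adding machine composed
  with the complement, in one order or the other. In 2-adic terms the complement is
  z \<mapsto> -1 - z and the adding machine is z \<mapsto> z + 1, so both composites are involutions:
  eta^(2^(k+1)) is the identity. On the other hand the block moves like an odometer on
  2^k states, so every period of eta is a multiple of 2^k. Hence every point, eventually
  constant or not, has least period 2^k or 2^(k+1).\<close>

fun bin_incr :: "bool list \<Rightarrow> bool list" where
  "bin_incr [] = []"
| "bin_incr (b # bs) = (if b then False # bin_incr bs else True # bs)"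

fun bin_val :: "bool list \<Rightarrow> nat" where
  "bin_val [] = 0"
| "bin_val (b # bs) = of_bool b + 2 * bin_val bs"

lemma length_bin_incr [simp]: "length (bin_incr l) = length l"
  by (induction l) auto

lemma length_funpow_bin_incr [simp]: "length ((bin_incr ^^ j) l) = length l"
  by (induction j) auto

lemma bin_val_less: "bin_val l < 2 ^ length l"
  by (induction l) auto

lemma bin_val_replicate_False [simp]: "bin_val (replicate n False) = 0"
  by (induction n) auto

lemma bin_val_inject: "length l = length l' \<Longrightarrow> bin_val l = bin_val l' \<Longrightarrow> l = l'"
proof (induction l arbitrary: l')
  case (Cons b bs)
  then obtain b' bs' where l': "l' = b' # bs'"
    by (cases l') auto
  with Cons.prems have "of_bool b + 2 * bin_val bs = of_bool b' + 2 * bin_val bs'"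
    by simp
  then have "b = b'" "bin_val bs = bin_val bs'"
    by (cases b; cases b'; simp; presburger)+
  with Cons l' show ?case
    by simp
qed simp

lemma bin_val_bin_incr: "bin_val (bin_incr l) = (bin_val l + 1) mod 2 ^ length l"
proof (induction l)
  case (Cons b bs)
  show ?case
  proof (cases b)
    case True
    with Cons.IH have "bin_val (bin_incr (b # bs)) = 2 * ((bin_val bs + 1) mod 2 ^ length bs)"
      by simp
    also have "\<dots> = (2 * bin_val bs + 2) mod (2 * 2 ^ length bs)"
      by (simp add: mult_mod_right)
    finally show ?thesis
      using True by simp
  next
    case False
    have "2 * bin_val bs + 1 < 2 * 2 ^ length bs"
      using bin_val_less[of bs] by simp
    with False show ?thesis
      by simp
  qed
qed simp

lemma bin_val_funpow_bin_incr: "bin_val ((bin_incr ^^ j) l) = (bin_val l + j) mod 2 ^ length l"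
  by (induction j) (simp_all add: bin_val_less bin_val_bin_incr mod_Suc_eq)

lemma list_all_id_iff_bin_val: "list_all id l \<longleftrightarrow> bin_val l = 2 ^ length l - 1"
proof (induction l)
  case (Cons b bs)
  have pos: "(2::nat) ^ length bs \<ge> 1"
    by simp
  show ?case
  proof (cases b)
    case True
    obtain n where "(2::nat) ^ length bs = Suc n"
      using pos not0_implies_Suc by fastforce
    then have "Suc (2 * (2 ^ length bs - 1)) = 2 * 2 ^ length bs - 1"
      by simp
    with Cons.IH pos True show ?thesis
      by auto
  next
    case False
    have "2 * bin_val bs \<noteq> 2 * 2 ^ length bs - 1"
      using pos by presburger
    with False show ?thesis
      by simp
  qed
qed simp

definition prepend :: "bool list \<Rightarrow> seq \<Rightarrow> seq" where
  "prepend l y = (\<lambda>i. if i < length l then l ! i else y (i - length l))"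

lemma prepend_Nil [simp]: "prepend [] y = y"
  by (simp add: prepend_def)

lemma prepend_Cons: "prepend (b # l) y = case_nat b (prepend l y)"
  by (rule ext, simp add: prepend_def split: nat.split)

lemma prepend_map_upt: "prepend (map x [0..<k]) (\<lambda>i. x (i + k)) = x"
  by (auto simp: prepend_def)

lemma map_prepend_upt: "length l = k \<Longrightarrow> map (prepend l y) [0..<k] = l"
  by (simp add: prepend_def list_eq_iff_nth_eq)

lemma prepend_in_cylinder_iff: "length l = length w \<Longrightarrow> prepend l y \<in> cylinder w \<longleftrightarrow> l = w"
  by (auto simp: cylinder_def prepend_def list_eq_iff_nth_eq)

lemma conc_const_eq_prepend: "conc_const w c = prepend w (\<lambda>_. c)"
  by (simp add: conc_const_def prepend_def)

lemma tau_prepend: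
  "length l = length w \<Longrightarrow> tau w (prepend l y) = prepend l (if l = w then Not \<circ> y else y)"
  by (auto simp: tau_def prepend_in_cylinder_iff) (auto simp: prepend_def)

lemma adding_machine_case_nat:
  "adding_machine (case_nat b x) = (if b then case_nat False (adding_machine x) else case_nat True x)"
  by (rule ext, simp split: nat.split) (auto simp: adding_machine_def All_less_Suc2)

lemma adding_machine_prepend:
  "adding_machine (prepend l y) = prepend (bin_incr l) (if list_all id l then adding_machine y else y)"
  by (induction l) (auto simp: prepend_Cons adding_machine_case_nat)

lemma adding_machine_complement_adding_machine:
  "adding_machine (Not \<circ> adding_machine z) = Not \<circ> z"
proof
  fix i
  show "adding_machine (Not \<circ> adding_machine z) i = (Not \<circ> z) i"
  proof (cases "\<forall>j<i. z j")
    case True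
    then have "\<forall>j<i. \<not> adding_machine z j"
      by (auto simp: adding_machine_def)
    with True show ?thesis
      by (simp add: adding_machine_def)
  next
    case False
    define j0 where "j0 = (LEAST j. \<not> z j)"
    have "\<not> z j0" and "j0 < i" and "\<forall>j<j0. z j"
      using False LeastI[of "\<lambda>j. \<not> z j"] Least_le[of "\<lambda>j. \<not> z j"] not_less_Least[of _ "\<lambda>j. \<not> z j"]
      unfolding j0_def by (blast, meson le_less_trans, blast)
    then have "adding_machine z j0"
      by (simp add: adding_machine_def)
    with \<open>j0 < i\<close> have "\<not> (\<forall>j<i. (Not \<circ> adding_machine z) j)"
      by auto
    with False show ?thesis
      by (simp add: adding_machine_def)
  qed
qed

lemma involution_adding_machine_complement:
  "adding_machine (Not \<circ> adding_machine (Not \<circ> y)) = y"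
  using adding_machine_complement_adding_machine[of "Not \<circ> y"] by (simp add: comp_def)

lemma involution_complement_adding_machine:
  "Not \<circ> adding_machine (Not \<circ> adding_machine y) = y"
  using adding_machine_complement_adding_machine[of y] by (simp add: comp_def)

definition eta :: "bool list \<Rightarrow> seq \<Rightarrow> seq" where
  "eta w = adding_machine \<circ> tau w"

definition tail_step :: "bool list \<Rightarrow> bool list \<Rightarrow> seq \<Rightarrow> seq" where
  "tail_step w l y = (if list_all id l then adding_machine else id) (if l = w then Not \<circ> y else y)"

lemma eta_prepend:
  "length l = length w \<Longrightarrow> eta w (prepend l y) = prepend (bin_incr l) (tail_step w l y)"
  by (simp add: eta_def tail_step_def tau_prepend adding_machine_prepend)

text \<open>The tail after the block has run through the values a, ..., b - 1, where
  b \<le> 2^length w: the complement happens at the value bin_val w, the carry at the top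
  value 2^length w - 1, and so never before the complement.\<close>
definition tail_after :: "bool list \<Rightarrow> nat \<Rightarrow> nat \<Rightarrow> seq \<Rightarrow> seq" where
  "tail_after w a b y =
    (if a \<le> 2 ^ length w - 1 \<and> 2 ^ length w - 1 < b then adding_machine else id)
      (if a \<le> bin_val w \<and> bin_val w < b then Not \<circ> y else y)"

lemma tail_after_same [simp]: "tail_after w a a y = y"
  by (auto simp: tail_after_def)

lemma tail_after_Suc:
  assumes "length l = length w" and "a \<le> bin_val l"
  shows "tail_after w a (Suc (bin_val l)) y = tail_step w l (tail_after w a (bin_val l) y)"
proof -
  have "bin_val w \<le> 2 ^ length w - 1" and "bin_val l \<le> 2 ^ length w - 1"
    using bin_val_less[of w] bin_val_less[of l] assms(1) by simp_all
  moreover have "l = w \<longleftrightarrow> bin_val l = bin_val w"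
    using bin_val_inject[OF assms(1)] by auto
  moreover have "list_all id l \<longleftrightarrow> bin_val l = 2 ^ length w - 1"
    using list_all_id_iff_bin_val[of l] assms(1) by simp
  ultimately show ?thesis
    using assms(2) by (auto simp: tail_after_def tail_step_def)
qed

lemma eta_funpow_prepend:
  assumes "length l = length w" and "bin_val l + j \<le> 2 ^ length w"
  shows "(eta w ^^ j) (prepend l y) =
    prepend ((bin_incr ^^ j) l) (tail_after w (bin_val l) (bin_val l + j) y)"
  using assms(2)
proof (induction j)
  case (Suc j)
  let ?l = "(bin_incr ^^ j) l"
  have "bin_val ?l = bin_val l + j"
    using bin_val_funpow_bin_incr[of j l] Suc.prems assms(1) by simp
  then show ?case
    using Suc assms(1) tail_after_Suc[of ?l w "bin_val l"] by (simp add: eta_prepend)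
qed simp

lemma eta_funpow_period_prepend:
  assumes "length l = length w"
  shows "(eta w ^^ 2 ^ length w) (prepend l y) = prepend l
    (if bin_val l \<le> bin_val w then adding_machine (Not \<circ> y) else Not \<circ> adding_machine y)"
proof -
  let ?N = "2 ^ length w" and ?a = "bin_val l"
  have a: "?a < ?N"
    using bin_val_less[of l] assms by simp
  define l0 where "l0 = (bin_incr ^^ (?N - ?a)) l"
  have l0: "length l0 = length w" "bin_val l0 = 0"
    using bin_val_funpow_bin_incr[of "?N - ?a" l] assms a by (simp_all add: l0_def)
  have "(bin_incr ^^ ?a) l0 = l"
    using bin_val_funpow_bin_incr[of ?a l0] l0 a assms by (intro bin_val_inject) simp_all
  then have "(eta w ^^ ?a) ((eta w ^^ (?N - ?a)) (prepend l y)) =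
      prepend l (tail_after w 0 ?a (tail_after w ?a ?N y))"
    using eta_funpow_prepend[OF assms, of "?N - ?a" y] eta_funpow_prepend[OF l0(1), of ?a] a l0
    by (simp add: l0_def)
  moreover have "eta w ^^ ?N = (eta w ^^ ?a) \<circ> (eta w ^^ (?N - ?a))"
    using a by (simp flip: funpow_add)
  ultimately have "(eta w ^^ ?N) (prepend l y) =
      prepend l (tail_after w 0 ?a (tail_after w ?a ?N y))"
    by simp
  also have "\<dots> = prepend l
      (if ?a \<le> bin_val w then adding_machine (Not \<circ> y) else Not \<circ> adding_machine y)"
    using a bin_val_less[of w] by (auto simp: tail_after_def)
  finally show ?thesis .
qed

lemma eta_funpow_double_period: "(eta w ^^ (2 * 2 ^ length w)) x = x"
proof -
  let ?N = "2 ^ length w" and ?l = "map x [0..<length w]" and ?y = "\<lambda>i. x (i + length w)"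
  have "(eta w ^^ (2 * ?N)) (prepend ?l ?y) = (eta w ^^ ?N) ((eta w ^^ ?N) (prepend ?l ?y))"
    by (simp add: funpow_add mult_2)
  also have "\<dots> = prepend ?l ?y"
    by (simp add: eta_funpow_period_prepend involution_adding_machine_complement
        involution_complement_adding_machine)
  finally show ?thesis
    by (simp only: prepend_map_upt)
qed

lemma block_eta: "map (eta w x) [0..<length w] = bin_incr (map x [0..<length w])"
proof -
  let ?l = "map x [0..<length w]" and ?y = "\<lambda>i. x (i + length w)"
  have "eta w x = prepend (bin_incr ?l) (tail_step w ?l ?y)"
    using eta_prepend[of ?l w ?y] by (simp add: prepend_map_upt)
  then show ?thesis
    by (simp add: map_prepend_upt)
qed

lemma block_funpow_eta:
  "map ((eta w ^^ j) x) [0..<length w] = (bin_incr ^^ j) (map x [0..<length w])"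
  by (induction j) (simp_all add: block_eta)

lemma period_dvd_eta:
  assumes "(eta w ^^ q) x = x"
  shows "2 ^ length w dvd q"
proof -
  let ?l = "map x [0..<length w]"
  have "(bin_incr ^^ q) ?l = ?l"
    using block_funpow_eta[of q w x] assms by simp
  then have "(bin_val ?l + q) mod 2 ^ length w = bin_val ?l mod 2 ^ length w"
    using bin_val_funpow_bin_incr[of q ?l] bin_val_less[of ?l] by simp
  then show ?thesis
    by (simp add: mod_eq_dvd_iff_nat)
qed

lemma cylinder_iff_map_upt: "x \<in> cylinder w \<longleftrightarrow> map x [0..<length w] = w"
proof
  show "map x [0..<length w] = w" if "x \<in> cylinder w"
    using that by (intro nth_equalityI) (simp_all add: cylinder_def)
  show "x \<in> cylinder w" if block: "map x [0..<length w] = w"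
    unfolding cylinder_def
  proof (intro CollectI allI impI)
    fix i
    assume "i < length w"
    then have "map x [0..<length w] ! i = x i"
      by simp
    with block show "x i = w ! i"
      by simp
  qed
qed

lemma funpow_bin_incr_replicate_eq_iff:
  assumes "j < 2 ^ length w"
  shows "(bin_incr ^^ j) (replicate (length w) False) = w \<longleftrightarrow> j = bin_val w"
  using bin_val_funpow_bin_incr[of j "replicate (length w) False"] assms
    bin_val_inject[of "(bin_incr ^^ j) (replicate (length w) False)" w]
  by auto

lemma eta_funpow_zero:
  assumes "j \<le> bin_val w"
  shows "(eta w ^^ j) (\<lambda>_. False) = prepend ((bin_incr ^^ j) (replicate (length w) False)) (\<lambda>_. False)"
proof -
  have "prepend (replicate (length w) False) (\<lambda>_. False) = (\<lambda>_. False)"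
    by (auto simp: prepend_def)
  moreover have "tail_after w 0 j (\<lambda>_. False) = (\<lambda>_. False)"
    using assms bin_val_less[of w] by (auto simp: tail_after_def)
  ultimately show ?thesis
    using eta_funpow_prepend[of "replicate (length w) False" w j "\<lambda>_. False"] assms
      bin_val_less[of w] by simp
qed

lemma eta_funpow_period_zero: "(eta w ^^ 2 ^ length w) (\<lambda>_. False) = (\<lambda>_. False)"
proof -
  have "prepend (replicate (length w) False) (\<lambda>_. False) = (\<lambda>_. False)"
    by (auto simp: prepend_def)
  moreover have "adding_machine (Not \<circ> (\<lambda>_. False)) = (\<lambda>_. False)"
    by (simp add: adding_machine_def)
  ultimately show ?thesis
    using eta_funpow_period_prepend[of "replicate (length w) False" w "\<lambda>_. False"] by simp
qed

lemma orbit_zero_inter_cylinder: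
  "orbit (eta w) (\<lambda>_. False) \<inter> cylinder w = {conc_const w False}"
proof -
  let ?N = "2 ^ length w"
  have block: "(eta w ^^ j) (\<lambda>_. False) \<in> cylinder w \<longleftrightarrow> j = bin_val w" if "j < ?N" for j
    using block_funpow_eta[of j w "\<lambda>_. False"] funpow_bin_incr_replicate_eq_iff[OF that]
    by (simp add: cylinder_iff_map_upt map_replicate_const)
  have "orbit (eta w) (\<lambda>_. False) = {(eta w ^^ j) (\<lambda>_. False) | j. j < ?N}"
    using funpow_mod_eq[OF eta_funpow_period_zero, of _ w]
    unfolding orbit_def by (auto intro: exI[of _ "j mod ?N" for j])
  also have "\<dots> \<inter> cylinder w = {(eta w ^^ bin_val w) (\<lambda>_. False)}"
    using block bin_val_less[of w] by auto
  also have "(eta w ^^ bin_val w) (\<lambda>_. False) = conc_const w False"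
    using eta_funpow_zero[of "bin_val w" w] funpow_bin_incr_replicate_eq_iff[OF bin_val_less, of w]
    by (simp add: conc_const_eq_prepend)
  finally show ?thesis .
qed

lemma periodic_of_period_if_dvd:
  assumes "0 < p" and "(f ^^ p) x = x" and "\<And>q. (f ^^ q) x = x \<Longrightarrow> p dvd q"
  shows "periodic_of_period f p x"
  using assms nat_dvd_not_less unfolding periodic_of_period_def by blast

lemma periodic_of_period_Least:
  assumes "0 < p" and "(f ^^ p) x = x"
  shows "periodic_of_period f (LEAST q. 0 < q \<and> (f ^^ q) x = x) x"
  using LeastI[of "\<lambda>q. 0 < q \<and> (f ^^ q) x = x", OF conjI[OF assms]]
    not_less_Least[of _ "\<lambda>q. 0 < q \<and> (f ^^ q) x = x"]
  unfolding periodic_of_period_def by blast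

lemma ex_periodic_of_period_multiple:
  assumes "0 < p" and "(f ^^ p) x = x" and "\<And>q. (f ^^ q) x = x \<Longrightarrow> N dvd q"
  shows "\<exists>m>0. periodic_of_period f (m * N) x"
proof -
  let ?p = "LEAST q. 0 < q \<and> (f ^^ q) x = x"
  have least: "periodic_of_period f ?p x"
    using periodic_of_period_Least[OF assms(1,2)] .
  then obtain m where "?p = m * N"
    using assms(3) unfolding periodic_of_period_def by (metis dvd_def mult.commute)
  with least show ?thesis
    unfolding periodic_of_period_def by (metis gr0I mult_0)
qed

lemma continuous_map_Sigma_topI:
  assumes "\<And>i. \<exists>N. \<forall>x y. (\<forall>j<N. x j = y j) \<longrightarrow> f x i = f y i"
  shows "continuous_map Sigma_top Sigma_top f"
  unfolding Sigma_top_def continuous_map_componentwise_UNIV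
proof
  fix i
  obtain N where N: "\<And>x y. (\<forall>j<N. x j = y j) \<Longrightarrow> f x i = f y i" using assms by blast
  let ?P = "product_topology (\<lambda>_. discrete_topology (UNIV::bool set)) (UNIV::nat set)"
  show "continuous_map ?P (discrete_topology UNIV) (\<lambda>x. f x i)"
    unfolding continuous_map_openin_preimage_eq
  proof (intro conjI allI impI)
    show "(\<lambda>x. f x i) \<in> topspace ?P \<rightarrow> topspace (discrete_topology UNIV)" by simp
    fix U :: "bool set"
    show "openin ?P (topspace ?P \<inter> (\<lambda>x. f x i) -` U)"
    proof (subst openin_subopen, intro ballI)
      fix x assume x: "x \<in> topspace ?P \<inter> (\<lambda>x. f x i) -` U"
      let ?T = "PiE UNIV (\<lambda>j. if j < N then {x j} else UNIV)"
      show "\<exists>T. openin ?P T \<and> x \<in> T \<and> T \<subseteq> topspace ?P \<inter> (\<lambda>x. f x i) -` U"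
      proof (intro exI conjI)
        have "{j. (if j < N then {x j} else UNIV) \<noteq> topspace (discrete_topology (UNIV::bool set))} \<subseteq> {..<N}"
          by auto
        then show "openin ?P ?T"
          by (intro product_topology_basis) (auto intro: finite_subset)
        show "x \<in> ?T" by (auto simp: PiE_iff)
        show "?T \<subseteq> topspace ?P \<inter> (\<lambda>x. f x i) -` U"
        proof
          fix y assume "y \<in> ?T"
          then have "\<forall>j<N. x j = y j" by (auto simp: PiE_iff split: if_splits)
          then have "f y i = f x i" using N by metis
          then show "y \<in> topspace ?P \<inter> (\<lambda>x. f x i) -` U" using x by simp
        qed
      qed
    qed
  qed
qed

lemma eta_depends_on_initial_segment:
  "\<exists>N. \<forall>x y. (\<forall>j<N. x j = y j) \<longrightarrow> eta w x i = eta w y i"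
proof (intro exI allI impI)
  fix x y :: seq
  assume agree: "\<forall>j<Suc i + length w. x j = y j"
  then have "x \<in> cylinder w \<longleftrightarrow> y \<in> cylinder w"
    by (auto simp: cylinder_def)
  with agree have "tau w x j = tau w y j" if "j \<le> i" for j
    using that by (auto simp: tau_def)
  then show "eta w x i = eta w y i"
    by (auto simp: eta_def adding_machine_def)
qed

lemma continuous_map_eta: "continuous_map Sigma_top Sigma_top (eta w)"
  by (rule continuous_map_Sigma_topI) (rule eta_depends_on_initial_segment)

theorem mainTheorem4:
  fixes w :: "bool list" and k :: nat and \<eta> :: "seq \<Rightarrow> seq"
  assumes "k \<ge> 1" and "length w = k"
    and "\<eta> = adding_machine \<circ> tau w"
  shows "continuous_map Sigma_top Sigma_top \<eta>
    \<and> periodic_of_period \<eta> (2 ^ k) (\<lambda>_. False)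
    \<and> orbit \<eta> (\<lambda>_. False) \<inter> cylinder w = {conc_const w False}
    \<and> (\<forall>x \<in> B_set. periodic_point \<eta> x
         \<and> ((periodic_of_period \<eta> (2 ^ k) x \<and> x \<in> orbit \<eta> (\<lambda>_. False))
            \<or> (\<exists>m::nat. m > 0 \<and> periodic_of_period \<eta> (m * 2 ^ k) x)))"
proof -
  have \<eta>: "\<eta> = eta w"
    using assms(3) by (simp add: eta_def)
  have dvd: "2 ^ k dvd q" if "(\<eta> ^^ q) x = x" for q x
    using period_dvd_eta that assms(2) \<eta> by blast
  have "periodic_of_period \<eta> (2 ^ k) (\<lambda>_. False)"
    using eta_funpow_period_zero[of w] dvd by (intro periodic_of_period_if_dvd) (simp_all add: \<eta> assms(2))
  moreover have "periodic_point \<eta> x \<and> (\<exists>m>0. periodic_of_period \<eta> (m * 2 ^ k) x)" for x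
  proof -
    have "(\<eta> ^^ (2 * 2 ^ k)) x = x"
      using eta_funpow_double_period[of w x] by (simp add: \<eta> assms(2))
    moreover have "(0::nat) < 2 * 2 ^ k"
      by simp
    ultimately show ?thesis
      using ex_periodic_of_period_multiple[of "2 * 2 ^ k" \<eta> x] dvd
      unfolding periodic_point_def by blast
  qed
  ultimately show ?thesis
    using continuous_map_eta[of w] orbit_zero_inter_cylinder[of w] by (simp add: \<eta>)
qed

end
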